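(* Let $m\ge 3$ be an integer and let $f(x_1,x_2,x_3)=a_1P_m(x_1)+a_2P_m(x_2)+a_3P_m(x_3)$ with $a_1,a_2,a_3$ positive integers. Let $L=\mathbb{Z}\mathbf{e}_1+\mathbb{Z}\mathbf{e}_2+\mathbb{Z}\mathbf{e}_3$ be a $\mathbb{Z}$-lattice with Gram matrix $(B(\mathbf{e}_i,\mathbf{e}_j))=\mathrm{diag}(a_1c^2,a_2c^2,a_3c^2)$, and let $\mathbf{v}=-\frac{d}{c}(\mathbf{e}_1+\mathbf{e}_2+\mathbf{e}_3)\in\mathbb{Q}L$. Then $f$ is regular if and only if the $\mathbb{Z}$-coset $L+\mathbf{v}$ is tight regular.
   Context: $P_m(x)=\frac{(m-2)x^2-(m-4)x}{2}$. Define $\delta=4$ if $m$ is odd, $\delta=2$ if $m\equiv2\pmod4$, $\delta=1$ if $m\equiv0\pmod4$; $c=\delta\frac{m-2}{2}$, $d=\delta\frac{m-4}{4}$. An integer $n$ is locally represented by $f$ if $f=n$ is solvable over $\mathbb{Z}_p$ for every prime $p$ and over $\mathbb{R}$; $f$ is regular if it represents (over $\mathbb{Z}$) every nonnegative integer locally represented by $f$. For the coset: $Q$ is the quadratic map of $\mathbb{Q}L$ with $B(\mathbf{x},\mathbf{y})=\frac12(Q(\mathbf{x}+\mathbf{y})-Q(\mathbf{x})-Q(\mathbf{y}))$; an integer $n$ is represented by $L+\mathbf{v}$ if $n=Q(\mathbf{x}+\mathbf{v})$ for some $\mathbf{x}\in L$, and locally represented if for every prime $p$ there is $\mathbf{x}_p\in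 L\otimes\mathbb{Z}_p$ with $Q(\mathbf{x}_p+\mathbf{v})=n$. With $\min(L+\mathbf{v})=\min\{Q(\mathbf{x}+\mathbf{v}):\mathbf{x}\in L\}$, the coset $L+\mathbf{v}$ is tight regular if it represents every locally represented integer that is $\ge\min(L+\mathbf{v})$. *)

theory Defs
  imports "HOL-Number_Theory.Number_Theory" Complex_Main
begin

(* m-gonal number P_m(x) = ((m-2)x^2 - (m-4)x)/2; the numerator is always even
   (it equals (m-2)(x^2-x) + 2x), so integer division is exact. *)
definition polyg :: "int \<Rightarrow> int \<Rightarrow> int" where
  "polyg m x = ((m - 2) * x^2 - (m - 4) * x) div 2"

definition polygR :: "int \<Rightarrow> real \<Rightarrow> real" where
  "polygR m x = ((real_of_int m - 2) * x^2 - (real_of_int m - 4) * x) / 2"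

definition delta :: "int \<Rightarrow> int" where
  "delta m = (if odd m then 4 else if m mod 4 = 2 then 2 else 1)"

(* c = delta (m-2)/2 and d = delta (m-4)/4 ; both are integers (exact divisions) *)
definition cc :: "int \<Rightarrow> int" where
  "cc m = delta m * (m - 2) div 2"

definition dd :: "int \<Rightarrow> int" where
  "dd m = delta m * (m - 4) div 4"

definition fform :: "int \<Rightarrow> int \<Rightarrow> int \<Rightarrow> int \<Rightarrow> int \<Rightarrow> int \<Rightarrow> int \<Rightarrow> int" where
  "fform m a1 a2 a3 x1 x2 x3 = a1 * polyg m x1 + a2 * polyg m x2 + a3 * polyg m x3"

definition fformR :: "int \<Rightarrow> int \<Rightarrow> int \<Rightarrow> int \<Rightarrow> real \<Rightarrow> real \<Rightarrow> real \<Rightarrow> real" where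
  "fformR m a1 a2 a3 x1 x2 x3 =
     of_int a1 * polygR m x1 + of_int a2 * polygR m x2 + of_int a3 * polygR m x3"

(* Solvability of f = n over Z_p, expressed (no p-adic integers in the library)
   as solvability modulo every power p^k; by compactness of Z_p and density of Z
   in Z_p this is equivalent to solvability over Z_p. *)
definition f_loc_Zp :: "int \<Rightarrow> int \<Rightarrow> int \<Rightarrow> int \<Rightarrow> int \<Rightarrow> int \<Rightarrow> bool" where
  "f_loc_Zp m a1 a2 a3 p n =
     (\<forall>k::nat. \<exists>x1 x2 x3 :: int. [fform m a1 a2 a3 x1 x2 x3 = n] (mod p ^ k))"

definition f_loc_rep :: "int \<Rightarrow> int \<Rightarrow> int \<Rightarrow> int \<Rightarrow> int \<Rightarrow> bool" where
  "f_loc_rep m a1 a2 a3 n =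
     ((\<forall>p::int. prime p \<longrightarrow> f_loc_Zp m a1 a2 a3 p n) \<and>
      (\<exists>x1 x2 x3 :: real. fformR m a1 a2 a3 x1 x2 x3 = of_int n))"

definition f_rep :: "int \<Rightarrow> int \<Rightarrow> int \<Rightarrow> int \<Rightarrow> int \<Rightarrow> bool" where
  "f_rep m a1 a2 a3 n = (\<exists>x1 x2 x3 :: int. fform m a1 a2 a3 x1 x2 x3 = n)"

definition f_regular :: "int \<Rightarrow> int \<Rightarrow> int \<Rightarrow> int \<Rightarrow> bool" where
  "f_regular m a1 a2 a3 =
     (\<forall>n::int. n \<ge> 0 \<longrightarrow> f_loc_rep m a1 a2 a3 n \<longrightarrow> f_rep m a1 a2 a3 n)"

(* The lattice L = Z e1 + Z e2 + Z e3 with Gram matrix diag(g1,g2,g3), vectors of QL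
   written in coordinates w.r.t. e1,e2,e3 (embedded in the reals); its quadratic map is
   Q(y1 e1 + y2 e2 + y3 e3) = g1 y1^2 + g2 y2^2 + g3 y3^2. *)
definition Qdiag :: "int \<Rightarrow> int \<Rightarrow> int \<Rightarrow> real \<Rightarrow> real \<Rightarrow> real \<Rightarrow> real" where
  "Qdiag g1 g2 g3 y1 y2 y3 = of_int g1 * y1^2 + of_int g2 * y2^2 + of_int g3 * y3^2"

definition coset_val :: "int \<Rightarrow> int \<Rightarrow> int \<Rightarrow> real \<Rightarrow> real \<Rightarrow> real \<Rightarrow> int \<Rightarrow> int \<Rightarrow> int \<Rightarrow> real" where
  "coset_val g1 g2 g3 v1 v2 v3 x1 x2 x3 =
     Qdiag g1 g2 g3 (of_int x1 + v1) (of_int x2 + v2) (of_int x3 + v3)"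

definition coset_rep :: "int \<Rightarrow> int \<Rightarrow> int \<Rightarrow> real \<Rightarrow> real \<Rightarrow> real \<Rightarrow> int \<Rightarrow> bool" where
  "coset_rep g1 g2 g3 v1 v2 v3 n =
     (\<exists>x1 x2 x3 :: int. coset_val g1 g2 g3 v1 v2 v3 x1 x2 x3 = of_int n)"

(* local representation at p: Q(x_p + v) = n for some x_p in L (x) Z_p, rendered as
   Q(x + v) - n \<in> p^k Z for some x in L, for every k *)
definition coset_loc_rep :: "int \<Rightarrow> int \<Rightarrow> int \<Rightarrow> real \<Rightarrow> real \<Rightarrow> real \<Rightarrow> int \<Rightarrow> bool" where
  "coset_loc_rep g1 g2 g3 v1 v2 v3 n =
     (\<forall>p::int. prime p \<longrightarrow> (\<forall>k::nat. \<exists>x1 x2 x3 t :: int.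
        coset_val g1 g2 g3 v1 v2 v3 x1 x2 x3 = of_int n + of_int (p ^ k) * of_int t))"

definition coset_min :: "int \<Rightarrow> int \<Rightarrow> int \<Rightarrow> real \<Rightarrow> real \<Rightarrow> real \<Rightarrow> real" where
  "coset_min g1 g2 g3 v1 v2 v3 =
     Inf {coset_val g1 g2 g3 v1 v2 v3 x1 x2 x3 | x1 x2 x3. True}"

definition coset_tight_regular :: "int \<Rightarrow> int \<Rightarrow> int \<Rightarrow> real \<Rightarrow> real \<Rightarrow> real \<Rightarrow> bool" where
  "coset_tight_regular g1 g2 g3 v1 v2 v3 =
     (\<forall>n::int. coset_loc_rep g1 g2 g3 v1 v2 v3 n \<longrightarrow>
        real_of_int n \<ge> coset_min g1 g2 g3 v1 v2 v3 \<longrightarrow> coset_rep g1 g2 g3 v1 v2 v3 n)"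

end

theory Submission
  imports Defs
begin

(* Completing the square: (c x - d)^2 = \<delta> c P_m(x) + d^2, hence
   Q(x + v) = D f(x) + M with D = \<delta> c > 0 and M = d^2 (a1 + a2 + a3).
   So L + v represents exactly the integers D n + M with n represented by f, and its
   minimum is M because f \<ge> 0 = f(0). The same holds locally: a solution of
   Q(x + v) = N modulo p^(k + v_p(D)) forces D | N - M, and cancelling D gives a solution
   of f = (N - M) / D modulo p^k. Since f represents every n \<ge> 0 over the reals,
   regularity of f is exactly tight regularity of L + v. *)

lemma dvd_diff_of_cong_prime_powers:
  fixes D M n :: int
  assumes "D \<noteq> 0" and cong: "\<And>p k. prime p \<Longrightarrow> \<exists>y. [D * y + M = n] (mod p ^ k)"
  shows "D dvd n - M"
proof (cases "n - M = 0")
  case False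
  show ?thesis
  proof (rule multiplicity_le_imp_dvd[OF \<open>D \<noteq> 0\<close>])
    fix p :: int assume p: "prime p"
    obtain y where "[D * y + M = n] (mod p ^ multiplicity p D)"
      using cong p by blast
    then have "p ^ multiplicity p D dvd D * y + M - n"
      by (simp add: cong_iff_dvd_diff)
    moreover have "p ^ multiplicity p D dvd D * y"
      by (simp add: multiplicity_dvd dvd_mult2)
    ultimately have "p ^ multiplicity p D dvd D * y - (D * y + M - n)"
      by (rule dvd_diff[rotated])
    then have "p ^ multiplicity p D dvd n - M"
      by simp
    then show "multiplicity p D \<le> multiplicity p (n - M)"
      using False p by (intro multiplicity_geI) (auto simp: not_prime_unit)
  qed
qed simp

lemma cong_cancel_prime_power:
  fixes D y z :: int
  assumes "prime p" "D \<noteq> 0" "[D * y = D * z] (mod p ^ (k + multiplicity p D))"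
  shows "[y = z] (mod p ^ k)"
proof (cases "y = z")
  case False
  have "p ^ (k + multiplicity p D) dvd D * (y - z)"
    using assms(3) by (simp add: cong_iff_dvd_diff right_diff_distrib)
  then have "k + multiplicity p D \<le> multiplicity p (D * (y - z))"
    using assms False by (intro multiplicity_geI) (auto simp: not_prime_unit)
  also have "\<dots> = multiplicity p D + multiplicity p (y - z)"
    using assms False by (intro prime_elem_multiplicity_mult_distrib) auto
  finally have "p ^ k dvd y - z"
    by (intro multiplicity_dvd') simp
  then show ?thesis
    by (simp add: cong_iff_dvd_diff)
qed simp

lemma regular_iff_regular_affine_image:
  fixes D M :: int and loc rep :: "int \<Rightarrow> bool"
  assumes "D > 0"
  shows "(\<forall>n. 0 \<le> n \<longrightarrow> loc n \<longrightarrow> rep n) \<longleftrightarrow>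
    (\<forall>n. (\<exists>n'. n = D * n' + M \<and> loc n') \<longrightarrow> M \<le> n \<longrightarrow> (\<exists>n'. n = D * n' + M \<and> rep n'))"
proof -
  have "M \<le> D * n' + M \<longleftrightarrow> 0 \<le> n'" for n'
    using assms by (simp add: zero_le_mult_iff)
  moreover have "D * n' + M = D * n'' + M \<longleftrightarrow> n' = n''" for n' n''
    using assms by simp
  ultimately show ?thesis
    by metis
qed

lemma delta_pos: "delta m > 0"
  unfolding delta_def by simp

lemma two_mult_cc: "2 * cc m = delta m * (m - 2)"
proof -
  have "2 dvd delta m * (m - 2)"
    unfolding delta_def by (auto; presburger)
  then show ?thesis
    unfolding cc_def by simp
qed

lemma four_mult_dd: "4 * dd m = delta m * (m - 4)"
proof -
  have "4 dvd delta m * (m - 4)"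
    unfolding delta_def by (auto; presburger)
  then show ?thesis
    unfolding dd_def by simp
qed

lemma cc_pos:
  assumes "m \<ge> 3"
  shows "cc m > 0"
proof -
  have "2 * cc m > 0"
    using assms delta_pos[of m] by (simp add: two_mult_cc)
  then show ?thesis
    by simp
qed

lemma two_mult_polyg: "2 * polyg m x = (m - 2) * x^2 - (m - 4) * x"
proof -
  have "(m - 2) * x^2 - (m - 4) * x = (m - 2) * (x * (x - 1)) + 2 * x"
    by (simp add: power2_eq_square algebra_simps)
  then have "even ((m - 2) * x^2 - (m - 4) * x)"
    by simp
  then show ?thesis
    unfolding polyg_def by simp
qed

lemma polyg_nonneg:
  assumes "m \<ge> 3"
  shows "polyg m x \<ge> 0"
proof -
  have consecutive: "0 \<le> y * (y + 1)" for y :: int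
    by (cases "y \<ge> 0") (simp_all add: mult_nonpos_nonpos)
  have "2 * polyg m x = (m - 3) * ((x - 1) * ((x - 1) + 1)) + x * (x + 1)"
    unfolding two_mult_polyg by (simp add: power2_eq_square algebra_simps)
  then have "2 * polyg m x \<ge> 0"
    using consecutive[of "x - 1"] consecutive[of x] assms by simp
  then show ?thesis
    by simp
qed

lemma fform_nonneg:
  assumes "m \<ge> 3" "a1 \<ge> 0" "a2 \<ge> 0" "a3 \<ge> 0"
  shows "fform m a1 a2 a3 x1 x2 x3 \<ge> 0"
  unfolding fform_def using assms polyg_nonneg[OF assms(1)] by simp

lemma fform_origin: "fform m a1 a2 a3 0 0 0 = 0"
  unfolding fform_def polyg_def by simp

lemma square_cc_mult_sub_dd:
  "(cc m * x - dd m)^2 = delta m * cc m * polyg m x + (dd m)^2"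
proof -
  have "16 * (cc m * x - dd m)^2 = (2 * (2 * cc m) * x - 4 * dd m)^2"
    by (simp add: power2_eq_square algebra_simps)
  also have "\<dots> = (2 * (delta m * (m - 2)) * x - delta m * (m - 4))^2"
    by (simp only: two_mult_cc four_mult_dd)
  also have "\<dots> = 4 * delta m * (delta m * (m - 2)) * ((m - 2) * x^2 - (m - 4) * x)
      + (delta m * (m - 4))^2"
    by (simp add: power2_eq_square algebra_simps)
  also have "\<dots> = 4 * delta m * (2 * cc m) * (2 * polyg m x) + (4 * dd m)^2"
    by (simp only: two_mult_cc four_mult_dd two_mult_polyg)
  also have "\<dots> = 16 * (delta m * cc m * polyg m x + (dd m)^2)"
    by (simp add: power2_eq_square algebra_simps)
  finally show ?thesis
    by simp
qed

lemma fformR_attains_nonneg: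
  assumes "m \<ge> 3" "a1 > 0" "n \<ge> 0"
  shows "\<exists>x1 x2 x3. fformR m a1 a2 a3 x1 x2 x3 = of_int n"
proof -
  define f where "f x = of_int a1 * polygR m x" for x
  define b where "b = real_of_int n + 1"
  have "(real_of_int m - 2) * (b * (b - 1)) \<ge> 0"
    using assms by (simp add: b_def)
  then have "polygR m b \<ge> b"
    unfolding polygR_def by (simp add: power2_eq_square algebra_simps)
  moreover have "f b \<ge> polygR m b"
    using \<open>polygR m b \<ge> b\<close> assms unfolding f_def b_def
    by (simp add: mult_le_cancel_right1)
  ultimately have "f 0 \<le> of_int n" "of_int n \<le> f b" "0 \<le> b"
    using assms unfolding f_def polygR_def b_def by auto
  moreover have "\<forall>x. 0 \<le> x \<and> x \<le> b \<longrightarrow> isCont f x"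
    unfolding f_def polygR_def by (intro allI impI continuous_intros) simp
  ultimately obtain x where "f x = of_int n"
    using IVT[of f 0 "of_int n" b] by auto
  then have "fformR m a1 a2 a3 x 0 0 = of_int n"
    unfolding fformR_def f_def polygR_def by simp
  then show ?thesis
    by blast
qed

lemma f_loc_rep_iff:
  assumes "m \<ge> 3" "a1 > 0" "n \<ge> 0"
  shows "f_loc_rep m a1 a2 a3 n \<longleftrightarrow> (\<forall>p. prime p \<longrightarrow> f_loc_Zp m a1 a2 a3 p n)"
  unfolding f_loc_rep_def using fformR_attains_nonneg[OF assms] by blast

lemma coset_val_shifted_diagonal:
  fixes c d :: int
  assumes "c \<noteq> 0"
  shows "coset_val (a1 * c^2) (a2 * c^2) (a3 * c^2)
      (- (of_int d / of_int c)) (- (of_int d / of_int c)) (- (of_int d / of_int c)) x1 x2 x3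
    = of_int (a1 * (c * x1 - d)^2 + a2 * (c * x2 - d)^2 + a3 * (c * x3 - d)^2)"
proof -
  have "real_of_int c ^ 2 * (of_int x - of_int d / of_int c)^2 = of_int ((c * x - d)^2)" for x
    using assms by (simp add: power2_eq_square field_simps)
  then show ?thesis
    unfolding coset_val_def Qdiag_def by (simp add: algebra_simps)
qed

lemma coset_val_polygonal:
  assumes "m \<ge> 3"
  shows "coset_val (a1 * (cc m)^2) (a2 * (cc m)^2) (a3 * (cc m)^2)
      (- (of_int (dd m) / of_int (cc m))) (- (of_int (dd m) / of_int (cc m)))
      (- (of_int (dd m) / of_int (cc m))) x1 x2 x3
    = of_int (delta m * cc m * fform m a1 a2 a3 x1 x2 x3 + (dd m)^2 * (a1 + a2 + a3))"
  unfolding coset_val_shifted_diagonal[OF cc_pos[OF assms, THEN less_imp_neq, symmetric]]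
    square_cc_mult_sub_dd fform_def
  by (simp add: algebra_simps)

lemma coset_min_affine:
  assumes vals: "\<And>x1 x2 x3. coset_val g1 g2 g3 v1 v2 v3 x1 x2 x3 = of_int (D * F x1 x2 x3 + M)"
    and "D \<ge> 0" "\<And>x1 x2 x3. F x1 x2 x3 \<ge> 0" "F 0 0 0 = 0"
  shows "coset_min g1 g2 g3 v1 v2 v3 = of_int M"
  unfolding coset_min_def
proof (rule cInf_eq_minimum)
  show "of_int M \<in> {coset_val g1 g2 g3 v1 v2 v3 x1 x2 x3 | x1 x2 x3. True}"
    using vals[of 0 0 0, symmetric] assms(4) by auto
next
  fix y assume "y \<in> {coset_val g1 g2 g3 v1 v2 v3 x1 x2 x3 | x1 x2 x3. True}"
  then obtain x1 x2 x3 where "y = of_int (D * F x1 x2 x3 + M)"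
    using vals by auto
  moreover have "D * F x1 x2 x3 \<ge> 0"
    using assms by simp
  ultimately show "of_int M \<le> y"
    by linarith
qed

lemma coset_rep_affine:
  assumes "\<And>x1 x2 x3. coset_val g1 g2 g3 v1 v2 v3 x1 x2 x3 = of_int (D * F x1 x2 x3 + M)"
  shows "coset_rep g1 g2 g3 v1 v2 v3 n \<longleftrightarrow>
    (\<exists>n'. n = D * n' + M \<and> (\<exists>x1 x2 x3. F x1 x2 x3 = n'))"
  unfolding coset_rep_def assms of_int_eq_iff by auto

lemma coset_loc_rep_affine:
  assumes vals: "\<And>x1 x2 x3. coset_val g1 g2 g3 v1 v2 v3 x1 x2 x3 = of_int (D * F x1 x2 x3 + M)"
    and "D \<noteq> 0"
  shows "coset_loc_rep g1 g2 g3 v1 v2 v3 n \<longleftrightarrow>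
    (\<exists>n'. n = D * n' + M \<and>
      (\<forall>p. prime p \<longrightarrow> (\<forall>k. \<exists>x1 x2 x3. [F x1 x2 x3 = n'] (mod p ^ k))))"
proof -
  have "real_of_int a = of_int n + of_int q * of_int t \<longleftrightarrow> a = n + q * t" for a q t :: int
    by (simp only: of_int_mult[symmetric] of_int_add[symmetric] of_int_eq_iff)
  then have lin: "(\<exists>t. real_of_int a = of_int n + of_int q * of_int t) \<longleftrightarrow> [a = n] (mod q)"
    for a q :: int
    using cong_iff_lin[of n a q] cong_sym_eq[of a n q] by simp
  have loc_iff: "coset_loc_rep g1 g2 g3 v1 v2 v3 n \<longleftrightarrow>
      (\<forall>p. prime p \<longrightarrow> (\<forall>k. \<exists>x1 x2 x3. [D * F x1 x2 x3 + M = n] (mod p ^ k)))"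
    unfolding coset_loc_rep_def vals lin ..
  show ?thesis
  proof
    assume "coset_loc_rep g1 g2 g3 v1 v2 v3 n"
    then have loc: "\<And>p k. prime p \<Longrightarrow> \<exists>x1 x2 x3. [D * F x1 x2 x3 + M = n] (mod p ^ k)"
      using loc_iff by blast
    then have "\<exists>y. [D * y + M = n] (mod p ^ k)" if "prime p" for p k
      using that by blast
    then have "D dvd n - M"
      by (rule dvd_diff_of_cong_prime_powers[OF \<open>D \<noteq> 0\<close>])
    then obtain n' where n': "n = D * n' + M"
      by (metis dvd_def diff_eq_eq add.commute)
    have "\<exists>x1 x2 x3. [F x1 x2 x3 = n'] (mod p ^ k)" if "prime p" for p k
    proof -
      obtain x1 x2 x3 where "[D * F x1 x2 x3 + M = D * n' + M] (mod p ^ (k + multiplicity p D))"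
        using loc \<open>prime p\<close> unfolding n' by blast
      then have "[D * F x1 x2 x3 = D * n'] (mod p ^ (k + multiplicity p D))"
        by (rule cong_add_rcancel[THEN iffD1])
      then show ?thesis
        using cong_cancel_prime_power \<open>prime p\<close> \<open>D \<noteq> 0\<close> by blast
    qed
    then show "\<exists>n'. n = D * n' + M \<and>
        (\<forall>p. prime p \<longrightarrow> (\<forall>k. \<exists>x1 x2 x3. [F x1 x2 x3 = n'] (mod p ^ k)))"
      using n' by blast
  next
    assume "\<exists>n'. n = D * n' + M \<and>
        (\<forall>p. prime p \<longrightarrow> (\<forall>k. \<exists>x1 x2 x3. [F x1 x2 x3 = n'] (mod p ^ k)))"
    then show "coset_loc_rep g1 g2 g3 v1 v2 v3 n"
      unfolding loc_iff by (blast intro: cong_add cong_scalar_left cong_refl)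
  qed
qed

theorem proposition3p1:
  fixes m a1 a2 a3 :: int
  assumes "m \<ge> 3" and "a1 > 0" and "a2 > 0" and "a3 > 0"
  shows "f_regular m a1 a2 a3 \<longleftrightarrow>
    coset_tight_regular (a1 * (cc m)^2) (a2 * (cc m)^2) (a3 * (cc m)^2)
      (- (of_int (dd m) / of_int (cc m))) (- (of_int (dd m) / of_int (cc m)))
      (- (of_int (dd m) / of_int (cc m)))"
proof -
  define D where "D = delta m * cc m"
  define M where "M = (dd m)^2 * (a1 + a2 + a3)"
  note vals = coset_val_polygonal[OF assms(1), of a1 a2 a3, folded D_def M_def]
  have "D > 0"
    unfolding D_def using delta_pos cc_pos[OF assms(1)] by simp
  have min: "coset_min (a1 * (cc m)^2) (a2 * (cc m)^2) (a3 * (cc m)^2)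
      (- (of_int (dd m) / of_int (cc m))) (- (of_int (dd m) / of_int (cc m)))
      (- (of_int (dd m) / of_int (cc m))) = of_int M"
    using \<open>D > 0\<close> assms by (intro coset_min_affine[OF vals] fform_nonneg fform_origin) auto
  have "f_regular m a1 a2 a3 \<longleftrightarrow>
      (\<forall>n. 0 \<le> n \<longrightarrow> (\<forall>p. prime p \<longrightarrow> f_loc_Zp m a1 a2 a3 p n) \<longrightarrow> f_rep m a1 a2 a3 n)"
    unfolding f_regular_def using f_loc_rep_iff[OF assms(1,2)] by auto
  also have "\<dots> \<longleftrightarrow> coset_tight_regular (a1 * (cc m)^2) (a2 * (cc m)^2) (a3 * (cc m)^2)
      (- (of_int (dd m) / of_int (cc m))) (- (of_int (dd m) / of_int (cc m)))
      (- (of_int (dd m) / of_int (cc m)))"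
    unfolding regular_iff_regular_affine_image[OF \<open>D > 0\<close>, of _ _ M] coset_tight_regular_def min
      coset_rep_affine[OF vals] coset_loc_rep_affine[OF vals \<open>D > 0\<close>[THEN less_imp_neq, symmetric]]
      f_loc_Zp_def f_rep_def of_int_le_iff ..
  finally show ?thesis .
qed

end
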